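(* Let $(M,d)$ be a $\mathrm{CAT}(0)$ space, $x_1,\dots,x_n\in M$, $b_n$ their barycenter (the unique minimizer of $b\mapsto\frac1n\sum_i d(x_i,b)^2$), and $D$ the diameter of $\{x_1,\dots,x_n\}$. Let $I_1,\dots,I_m$ be i.i.d. uniform on $\{1,\dots,n\}$, $X_k=x_{I_k}$, and $\tilde b_m=\tilde B_m^{(t)}(X_1,\dots,X_m)$ with $t=(1/2,1/3,\dots,1/m)$. Let $\eta>0$ and $\delta\in(0,1)$. If $m\ge\frac{4D^2}{\eta^2}\max(1,\log(1/\delta))$, then $d(\tilde b_m,b_n)\le\eta$ with probability at least $1-\delta$.
   Context: A $\mathrm{CAT}(0)$ space is a complete geodesic metric space in which every geodesic triangle is no fatter than its Euclidean comparison triangle; geodesics are unique. Iterated barycenter: for $t=(t_2,\dots,t_m)\in(0,1)^{m-1}$, set $\tilde b_1=x_1$ and $\tilde b_k=\gamma_k(t_k)$ where $\gamma_k:[0,1]\to M$ is the constant-speed geodesic from $\tilde b_{k-1}$ to $x_k$; $\tilde B_m^{(t)}(x_1,\dots,x_m)=\tilde b_m$. *)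

theory Defs
  imports "HOL-Analysis.Analysis" "HOL-Probability.Probability"
begin

definition geodesic :: "(real \<Rightarrow> 'a::metric_space) \<Rightarrow> 'a \<Rightarrow> 'a \<Rightarrow> bool" where
  "geodesic \<gamma> x y \<longleftrightarrow> \<gamma> 0 = x \<and> \<gamma> 1 = y \<and>
     (\<forall>s\<in>{0..1}. \<forall>t\<in>{0..1}. dist (\<gamma> s) (\<gamma> t) = \<bar>s - t\<bar> * dist x y)"

text \<open>Pairs (point on a side of the geodesic triangle, its comparison point in the
  Euclidean plane (complex numbers)).\<close>
definition comparison_pairs ::
  "(real \<Rightarrow> 'a::metric_space) \<Rightarrow> (real \<Rightarrow> 'a) \<Rightarrow> (real \<Rightarrow> 'a) \<Rightarrow> complex \<Rightarrow> complex \<Rightarrow> complex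
     \<Rightarrow> ('a \<times> complex) set" where
  "comparison_pairs \<gamma>1 \<gamma>2 \<gamma>3 a b c =
     (\<lambda>s. (\<gamma>1 s, linepath a b s)) ` {0..1} \<union>
     (\<lambda>s. (\<gamma>2 s, linepath b c s)) ` {0..1} \<union>
     (\<lambda>s. (\<gamma>3 s, linepath c a s)) ` {0..1}"

text \<open>CAT(0) space: (complete, by the type class of the carrier type) geodesic metric
  space in which every geodesic triangle is no fatter than its Euclidean comparison
  triangle.\<close>
definition CAT0 :: "'a::complete_space itself \<Rightarrow> bool" where
  "CAT0 _ \<longleftrightarrow>
     (\<forall>x y::'a. \<exists>\<gamma>. geodesic \<gamma> x y) \<and>
     (\<forall>(x::'a) y z \<gamma>1 \<gamma>2 \<gamma>3 (a::complex) b c.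
        geodesic \<gamma>1 x y \<and> geodesic \<gamma>2 y z \<and> geodesic \<gamma>3 z x \<and>
        dist a b = dist x y \<and> dist b c = dist y z \<and> dist c a = dist z x \<longrightarrow>
        (\<forall>(p, p')\<in>comparison_pairs \<gamma>1 \<gamma>2 \<gamma>3 a b c.
          \<forall>(q, q')\<in>comparison_pairs \<gamma>1 \<gamma>2 \<gamma>3 a b c. dist p q \<le> dist p' q'))"

text \<open>The point at parameter s on the (unique, in a CAT(0) space) geodesic from x to y.\<close>
definition geo_pt :: "'a::metric_space \<Rightarrow> 'a \<Rightarrow> real \<Rightarrow> 'a" where
  "geo_pt x y s = (SOME \<gamma>. geodesic \<gamma> x y) s"

text \<open>Iterated barycenter, 1-indexed: ibar_aux t X k is \<open>b_{k+1}\<close>.\<close>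
primrec ibar_aux :: "(nat \<Rightarrow> real) \<Rightarrow> (nat \<Rightarrow> 'a::metric_space) \<Rightarrow> nat \<Rightarrow> 'a" where
  "ibar_aux t X 0 = X 1"
| "ibar_aux t X (Suc k) = geo_pt (ibar_aux t X k) (X (k + 2)) (t (k + 2))"

text \<open>\<open>B_m^{(t)}(X_1,\<dots>,X_m)\<close> with points X 1, ..., X m and weights t 2, ..., t m.\<close>
definition iter_bary :: "(nat \<Rightarrow> real) \<Rightarrow> (nat \<Rightarrow> 'a::metric_space) \<Rightarrow> nat \<Rightarrow> 'a" where
  "iter_bary t X m = ibar_aux t X (m - 1)"

definition is_barycenter :: "nat \<Rightarrow> (nat \<Rightarrow> 'a::metric_space) \<Rightarrow> 'a \<Rightarrow> bool" where
  "is_barycenter n x b \<longleftrightarrow>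
     (\<forall>c. (\<Sum>i<n. (dist (x i) b)\<^sup>2) / n \<le> (\<Sum>i<n. (dist (x i) c)\<^sup>2) / n)"

end

theory Submission
  imports Defs
begin

text \<open>
  Let T_t act on real functions by averaging \<psi> (geo_pt p (x i) t) over i, and let
  R_k = T_(1/2) o ... o T_(1/(k+1)). Then R_k \<psi> p is the expectation of \<psi> at the iterated
  barycenter b_(k+1) started at p, so E \<psi>(b_(k+1)) is the average of R_k \<psi> over the points.
  In a CAT(0) space T_t multiplies Lipschitz constants by 1 - t, hence R_k maps 1-Lipschitz
  functions to 1/(k+1)-Lipschitz ones; applying Hoeffding's lemma at every step shows that
  d(b_m, b) is sub-Gaussian with variance proxy D^2/(4m). The CN inequality together with
  the variance inequality of the barycenter gives E d(b_m, b)^2 \<le> D^2/m, so the mean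
  deviation is at most \<eta>/2, and Chernoff's bound concludes.
\<close>

section \<open>CAT(0) comparison inequalities\<close>

lemma geodesic_reverse: "geodesic \<gamma> x y \<Longrightarrow> geodesic (\<lambda>s. \<gamma> (1 - s)) y x"
  unfolding geodesic_def by (auto simp: dist_commute)

lemma geodesic_endpoints: "geodesic \<gamma> x y \<Longrightarrow> \<gamma> 0 = x \<and> \<gamma> 1 = y"
  unfolding geodesic_def by blast

lemma CAT0_geodesic_exists: "CAT0 TYPE('a::complete_space) \<Longrightarrow> \<exists>\<gamma>. geodesic \<gamma> (x::'a) y"
  unfolding CAT0_def by blast

lemma geodesic_geo_pt:
  assumes "CAT0 TYPE('a::complete_space)"
  shows "geodesic (geo_pt (x::'a) y) x y"
proof -
  have "geodesic (SOME \<gamma>. geodesic \<gamma> x y) x y"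
    using CAT0_geodesic_exists[OF assms] by (rule someI_ex)
  moreover have "geo_pt x y = (SOME \<gamma>. geodesic \<gamma> x y)"
    by (simp add: geo_pt_def fun_eq_iff)
  ultimately show ?thesis by simp
qed

text \<open>The vertices are 0, l1 and u + iv; for l1 = 0 the junk value u = x / 0 = 0 still
  gives the (degenerate) triangle.\<close>
lemma complex_triangle_exists:
  fixes l1 l2 l3 :: real
  assumes "0 \<le> l1" "0 \<le> l2" "0 \<le> l3" "l1 \<le> l2 + l3" "l2 \<le> l1 + l3" "l3 \<le> l1 + l2"
  shows "\<exists>a b c :: complex. dist a b = l1 \<and> dist b c = l2 \<and> dist c a = l3"
proof -
  define u where "u = (l1\<^sup>2 + l3\<^sup>2 - l2\<^sup>2) / (2 * l1)"
  define v where "v = sqrt (l3\<^sup>2 - u\<^sup>2)"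
  have "(l1 - l3)\<^sup>2 \<le> l2\<^sup>2" "l2\<^sup>2 \<le> (l1 + l3)\<^sup>2"
    using assms by (auto simp: abs_le_square_iff[symmetric] intro: power_mono)
  then have "\<bar>l1\<^sup>2 + l3\<^sup>2 - l2\<^sup>2\<bar> \<le> 2 * l1 * l3"
    by (simp add: power2_eq_square algebra_simps)
  then have "\<bar>u\<bar> \<le> l3"
    using assms by (cases "l1 = 0") (auto simp: u_def divide_le_eq mult.commute)
  then have v2: "v\<^sup>2 = l3\<^sup>2 - u\<^sup>2"
    unfolding v_def by (metis abs_le_square_iff abs_of_nonneg assms(3) diff_ge_0_iff_ge real_sqrt_pow2)
  have u: "2 * u * l1 = l1\<^sup>2 + l3\<^sup>2 - l2\<^sup>2"
    using assms by (cases "l1 = 0") (auto simp: u_def)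
  have "(cmod (complex_of_real l1 - Complex u v))\<^sup>2 = (l1 - u)\<^sup>2 + v\<^sup>2"
    by (simp add: cmod_power2)
  also have "\<dots> = l2\<^sup>2"
    using v2 u by (simp add: power2_eq_square algebra_simps)
  moreover have "(cmod (Complex u v))\<^sup>2 = l3\<^sup>2"
    using v2 by (simp add: cmod_power2)
  ultimately have "dist (complex_of_real l1) (Complex u v) = l2" "dist (Complex u v) 0 = l3"
    using assms by (auto simp: dist_norm)
  moreover have "dist 0 (complex_of_real l1) = l1"
    using assms by (simp add: dist_norm)
  ultimately show ?thesis by blast
qed

lemma comparison_triangle_exists:
  fixes x y z :: "'a::metric_space"
  shows "\<exists>a b c :: complex. dist a b = dist x y \<and> dist b c = dist y z \<and> dist c a = dist z x"
  using dist_triangle[of x z y] dist_triangle[of y x z] dist_triangle[of z y x]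
  by (intro complex_triangle_exists) (auto simp: dist_commute)

lemma CAT0_comparison:
  assumes "CAT0 TYPE('a::complete_space)"
    and "geodesic \<gamma>1 (x::'a) y" "geodesic \<gamma>2 y z" "geodesic \<gamma>3 z x"
    and "dist a b = dist x y" "dist b c = dist y z" "dist c a = dist z x"
    and "(p, p') \<in> comparison_pairs \<gamma>1 \<gamma>2 \<gamma>3 a b c"
    and "(q, q') \<in> comparison_pairs \<gamma>1 \<gamma>2 \<gamma>3 a b c"
  shows "dist p q \<le> dist p' q'"
  using assms unfolding CAT0_def by fast

lemma comparison_pairsI:
  assumes "s \<in> {0..1}"
  shows "(\<gamma>1 s, linepath a b s) \<in> comparison_pairs \<gamma>1 \<gamma>2 \<gamma>3 a b c"
    and "(\<gamma>2 s, linepath b c s) \<in> comparison_pairs \<gamma>1 \<gamma>2 \<gamma>3 a b c"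
    and "(\<gamma>3 s, linepath c a s) \<in> comparison_pairs \<gamma>1 \<gamma>2 \<gamma>3 a b c"
  using assms unfolding comparison_pairs_def by blast+

lemma norm_convex_combination_square:
  fixes u w :: "'b::real_inner"
  shows "(norm ((1 - t) *\<^sub>R u + t *\<^sub>R w))\<^sup>2
    = (1 - t) * (norm u)\<^sup>2 + t * (norm w)\<^sup>2 - t * (1 - t) * (norm (u - w))\<^sup>2"
  unfolding power2_norm_eq_inner
  by (simp add: inner_commute algebra_simps power2_eq_square)

text \<open>The CN inequality of Bruhat and Tits, read off the comparison triangle of p, y, z.\<close>
lemma CAT0_CN_inequality:
  assumes cat: "CAT0 TYPE('a::complete_space)" and t: "0 \<le> t" "t \<le> 1"
  shows "(dist (geo_pt (p::'a) y t) z)\<^sup>2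
    \<le> (1 - t) * (dist p z)\<^sup>2 + t * (dist y z)\<^sup>2 - t * (1 - t) * (dist p y)\<^sup>2"
proof -
  obtain \<gamma>2 \<gamma>3 where g: "geodesic \<gamma>2 y z" "geodesic \<gamma>3 z p"
    using CAT0_geodesic_exists[OF cat] by metis
  obtain a b c :: complex where abc: "dist a b = dist p y" "dist b c = dist y z" "dist c a = dist z p"
    using comparison_triangle_exists by blast
  have "dist (geo_pt p y t) (\<gamma>2 1) \<le> dist (linepath a b t) (linepath b c 1)"
    using t by (intro CAT0_comparison[OF cat geodesic_geo_pt[OF cat] g abc] comparison_pairsI) auto
  then have "dist (geo_pt p y t) z \<le> norm ((1 - t) *\<^sub>R (a - c) + t *\<^sub>R (b - c))"
    using geodesic_endpoints[OF g(1)] by (simp add: linepath_def dist_norm algebra_simps)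
  then have "(dist (geo_pt p y t) z)\<^sup>2 \<le> (norm ((1 - t) *\<^sub>R (a - c) + t *\<^sub>R (b - c)))\<^sup>2"
    by (intro power_mono) auto
  also have "\<dots> = (1 - t) * (norm (a - c))\<^sup>2 + t * (norm (b - c))\<^sup>2 - t * (1 - t) * (norm (a - b))\<^sup>2"
    by (simp add: norm_convex_combination_square)
  also have "\<dots> = (1 - t) * (dist p z)\<^sup>2 + t * (dist y z)\<^sup>2 - t * (1 - t) * (dist p y)\<^sup>2"
    using abc by (simp add: dist_norm[symmetric] dist_commute)
  finally show ?thesis .
qed

lemma CAT0_geo_pt_dist_start:
  assumes cat: "CAT0 TYPE('a::complete_space)" and t: "0 \<le> t" "t \<le> 1"
  shows "dist (geo_pt (p::'a) x t) (geo_pt q x t) \<le> (1 - t) * dist p q"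
proof -
  obtain \<gamma> where g: "geodesic \<gamma> p q"
    using CAT0_geodesic_exists[OF cat] by blast
  obtain a b c :: complex where abc: "dist a b = dist p q" "dist b c = dist q x" "dist c a = dist x p"
    using comparison_triangle_exists by blast
  have "dist (geo_pt p x (1 - (1 - t))) (geo_pt q x t) \<le> dist (linepath c a (1 - t)) (linepath b c t)"
    using t by (intro CAT0_comparison[OF cat g geodesic_geo_pt[OF cat]
        geodesic_reverse[OF geodesic_geo_pt[OF cat]] abc] comparison_pairsI) auto
  also have "\<dots> = norm ((1 - t) *\<^sub>R (a - b))"
    by (simp add: linepath_def dist_norm algebra_simps)
  also have "\<dots> = (1 - t) * dist p q"
    using t abc by (simp add: dist_norm)
  finally show ?thesis by simp
qed

lemma CAT0_geo_pt_dist_end: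
  assumes cat: "CAT0 TYPE('a::complete_space)" and t: "0 \<le> t" "t \<le> 1"
  shows "dist (geo_pt (p::'a) x t) (geo_pt p y t) \<le> t * dist x y"
proof -
  obtain \<gamma> where g: "geodesic \<gamma> x y"
    using CAT0_geodesic_exists[OF cat] by blast
  obtain a b c :: complex where abc: "dist a b = dist p x" "dist b c = dist x y" "dist c a = dist y p"
    using comparison_triangle_exists by blast
  have "dist (geo_pt p x t) (geo_pt p y (1 - (1 - t))) \<le> dist (linepath a b t) (linepath c a (1 - t))"
    using t by (intro CAT0_comparison[OF cat geodesic_geo_pt[OF cat] g
        geodesic_reverse[OF geodesic_geo_pt[OF cat]] abc] comparison_pairsI) auto
  also have "\<dots> = norm (t *\<^sub>R (b - c))"
    by (simp add: linepath_def dist_norm algebra_simps)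
  also have "\<dots> = t * dist x y"
    using t abc by (simp add: dist_norm)
  finally show ?thesis by simp
qed

section \<open>Uniform averages and Hoeffding's lemma\<close>

definition avg :: "nat \<Rightarrow> (nat \<Rightarrow> real) \<Rightarrow> real" where
  "avg n a = (\<Sum>i<n. a i) / n"

lemma avg_mono: "(\<And>i. i < n \<Longrightarrow> a i \<le> b i) \<Longrightarrow> avg n a \<le> avg n b"
  unfolding avg_def by (intro divide_right_mono sum_mono) auto

lemma avg_nonneg: "(\<And>i. i < n \<Longrightarrow> 0 \<le> a i) \<Longrightarrow> 0 \<le> avg n a"
  unfolding avg_def by (intro divide_nonneg_nonneg sum_nonneg) auto

lemma avg_affine: "n \<ge> 1 \<Longrightarrow> avg n (\<lambda>i. c * a i + e) = c * avg n a + e"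
  unfolding avg_def by (simp add: sum.distrib sum_distrib_left[symmetric] add_divide_distrib)

lemma avg_scale: "avg n (\<lambda>i. c * a i) = c * avg n a"
  unfolding avg_def by (simp add: sum_distrib_left)

lemma avg_const: "n \<ge> 1 \<Longrightarrow> avg n (\<lambda>_. c) = c"
  using avg_affine[of n 0 _ c] by simp

lemma avg_diff_le:
  assumes "n \<ge> 1" and "\<And>i. i < n \<Longrightarrow> \<bar>a i - b i\<bar> \<le> C"
  shows "\<bar>avg n a - avg n b\<bar> \<le> C"
proof -
  have shift: "avg n (\<lambda>i. f i + C) = avg n f + C" for f
    using avg_affine[OF assms(1), of 1 f C] by simp
  have "avg n a \<le> avg n (\<lambda>i. b i + C)" "avg n b \<le> avg n (\<lambda>i. a i + C)"
    by (intro avg_mono; force dest: assms(2) simp: abs_le_iff)+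
  then show ?thesis
    unfolding shift by (simp add: abs_le_iff)
qed

lemma avg_square_le: "(avg n a)\<^sup>2 \<le> avg n (\<lambda>i. (a i)\<^sup>2)"
  using sum_squared_le_sum_of_squares[of a "{..<n}"]
  by (cases "n = 0") (auto simp: avg_def power_divide power2_eq_square field_simps)

lemma nn_integral_pmf_of_set_lessThan:
  assumes "n \<ge> 1" and "\<And>i. 0 \<le> g i"
  shows "(\<integral>\<^sup>+i. ennreal (g i) \<partial>measure_pmf (pmf_of_set {..<n})) = ennreal (avg n g)"
proof -
  have "(\<integral>\<^sup>+i. ennreal (g i) \<partial>measure_pmf (pmf_of_set {..<n})) = (\<Sum>i<n. ennreal (g i)) / n"
    using assms(1) by (subst nn_integral_pmf_of_set) (auto simp: lessThan_empty_iff)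
  also have "\<dots> = ennreal (avg n g)"
    using assms by (simp add: avg_def divide_ennreal sum_nonneg ennreal_of_nat_eq_real_of_nat)
  finally show ?thesis .
qed

lemma avg_exp_le_Hoeffding:
  assumes n: "n \<ge> 1" and w: "\<And>i j. i < n \<Longrightarrow> j < n \<Longrightarrow> \<bar>a i - a j\<bar> \<le> w" and l: "l \<ge> 0"
  shows "avg n (\<lambda>i. exp (l * a i)) \<le> exp (l * avg n a + l\<^sup>2 * w\<^sup>2 / 8)"
proof (cases "l = 0")
  case True
  then show ?thesis using avg_const[OF n] by simp
next
  case False
  define M where "M = measure_pmf (pmf_of_set {..<n})"
  define lo where "lo = Min (a ` {..<n})"
  have "lo \<in> a ` {..<n}"
    using n unfolding lo_def by (intro Min_in) (auto simp: lessThan_empty_iff)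
  then obtain j where "j < n" "lo = a j"
    by blast
  moreover have "lo \<le> a i" if "i < n" for i
    using that unfolding lo_def by (intro Min_le) auto
  ultimately have range: "a i \<in> {lo..lo + w}" if "i < n" for i
    using w[OF that \<open>j < n\<close>] that by auto
  interpret interval_bounded_random_variable M a lo "lo + w"
  proof (rule interval_bounded_random_variable.intro)
    show "prob_space M"
      by (simp add: M_def measure_pmf.prob_space_axioms)
    show "interval_bounded_random_variable_axioms M a lo (lo + w)"
      using range n unfolding M_def
      by unfold_locales (auto simp: AE_measure_pmf_iff set_pmf_of_set lessThan_empty_iff)
  qed
  define \<mu> where "\<mu> = avg n a"
  have "expectation a = \<mu>"
    using n unfolding M_def \<mu>_def avg_def by (subst integral_pmf_of_set) (auto simp: lessThan_empty_iff)
  then have "(\<integral>\<^sup>+i. exp (l * (a i - \<mu>)) \<partial>M) \<le> ennreal (exp (l\<^sup>2 * w\<^sup>2 / 8))"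
    using Hoeffdings_lemma_nn_integral[of l] False l by simp
  moreover have "(\<integral>\<^sup>+i. exp (l * (a i - \<mu>)) \<partial>M) = ennreal (avg n (\<lambda>i. exp (l * (a i - \<mu>))))"
    unfolding M_def by (rule nn_integral_pmf_of_set_lessThan[OF n]) simp
  ultimately have "avg n (\<lambda>i. exp (- l * \<mu>) * exp (l * a i)) \<le> exp (l\<^sup>2 * w\<^sup>2 / 8)"
    by (simp add: right_diff_distrib exp_diff exp_minus field_simps)
  then have "exp (- l * \<mu>) * avg n (\<lambda>i. exp (l * a i)) \<le> exp (l\<^sup>2 * w\<^sup>2 / 8)"
    by (simp only: avg_scale)
  then show ?thesis
    unfolding \<mu>_def[symmetric] exp_add by (simp add: exp_minus field_simps)
qed

section \<open>Barycenters and averaging along geodesics\<close>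

lemma is_barycenter_avg:
  "is_barycenter n x b \<longleftrightarrow> (\<forall>c. avg n (\<lambda>i. (dist (x i) b)\<^sup>2) \<le> avg n (\<lambda>i. (dist (x i) c)\<^sup>2))"
  unfolding is_barycenter_def avg_def ..

text \<open>Compare b with the points of the geodesic from b to p, and let them tend to b.\<close>
lemma CAT0_barycenter_variance_inequality:
  assumes cat: "CAT0 TYPE('a::complete_space)" and n: "n \<ge> 1" and bar: "is_barycenter n x b"
  shows "avg n (\<lambda>i. (dist (x i) b)\<^sup>2) + (dist p b)\<^sup>2 \<le> avg n (\<lambda>i. (dist p (x i :: 'a))\<^sup>2)"
proof -
  define A where "A = avg n (\<lambda>i. (dist p (x i))\<^sup>2)"
  define B where "B = avg n (\<lambda>i. (dist (x i) b)\<^sup>2)"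
  have "z * (dist b p)\<^sup>2 \<le> A - B" if z: "0 < z" "z < 1" for z
  proof -
    define s where "s = 1 - z"
    have s: "0 < s" "s < 1" using z by (auto simp: s_def)
    have "B \<le> avg n (\<lambda>i. (dist (x i) (geo_pt b p s))\<^sup>2)"
      using bar unfolding is_barycenter_avg B_def by blast
    also have "\<dots> \<le> avg n (\<lambda>i. (1 - s) * (dist b (x i))\<^sup>2 + s * (dist p (x i))\<^sup>2
                               - s * (1 - s) * (dist b p)\<^sup>2)"
      using s CAT0_CN_inequality[OF cat] by (intro avg_mono) (simp add: dist_commute)
    also have "\<dots> = (1 - s) * B + s * A - s * (1 - s) * (dist b p)\<^sup>2"
      using n by (simp add: avg_def A_def B_def sum.distrib sum_subtractf sum_distrib_left
          dist_commute[of b] add_divide_distrib diff_divide_distrib)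
    finally have "s * ((1 - s) * (dist b p)\<^sup>2) \<le> s * (A - B)"
      by (simp add: algebra_simps)
    then show ?thesis
      using s by (simp add: s_def)
  qed
  then have "(dist b p)\<^sup>2 \<le> A - B"
    by (rule field_le_mult_one_interval)
  then show ?thesis
    by (simp add: A_def B_def dist_commute)
qed

definition geo_step :: "(nat \<Rightarrow> 'a::metric_space) \<Rightarrow> nat \<Rightarrow> real \<Rightarrow> ('a \<Rightarrow> real) \<Rightarrow> 'a \<Rightarrow> real" where
  "geo_step x n t \<psi> p = avg n (\<lambda>i. \<psi> (geo_pt p (x i) t))"

text \<open>geo_steps x n k = T_(1/2) o ... o T_(1/(k+1)) with T_t = geo_step x n t: the operator R_k.\<close>
primrec geo_steps :: "(nat \<Rightarrow> 'a::metric_space) \<Rightarrow> nat \<Rightarrow> nat \<Rightarrow> ('a \<Rightarrow> real) \<Rightarrow> 'a \<Rightarrow> real" where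
  "geo_steps x n 0 \<psi> = \<psi>"
| "geo_steps x n (Suc k) \<psi> = geo_steps x n k (geo_step x n (1 / real (k + 2)) \<psi>)"

lemma geo_step_mono: "(\<And>p. \<psi> p \<le> \<theta> p) \<Longrightarrow> geo_step x n t \<psi> p \<le> geo_step x n t \<theta> p"
  unfolding geo_step_def by (intro avg_mono)

lemma geo_step_nonneg: "(\<And>p. 0 \<le> \<psi> p) \<Longrightarrow> 0 \<le> geo_step x n t \<psi> p"
  unfolding geo_step_def by (intro avg_nonneg)

lemma geo_step_affine:
  "n \<ge> 1 \<Longrightarrow> geo_step x n t (\<lambda>p. c * \<psi> p + e) = (\<lambda>p. c * geo_step x n t \<psi> p + e)"
  unfolding geo_step_def by (simp add: avg_affine)

lemma geo_step_scale: "geo_step x n t (\<lambda>p. c * \<psi> p) = (\<lambda>p. c * geo_step x n t \<psi> p)"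
  unfolding geo_step_def by (simp add: avg_scale)

lemma geo_steps_mono: "(\<And>p. \<psi> p \<le> \<theta> p) \<Longrightarrow> geo_steps x n k \<psi> p \<le> geo_steps x n k \<theta> p"
  by (induction k arbitrary: \<psi> \<theta> p) (simp_all add: geo_step_mono)

lemma geo_steps_affine:
  "n \<ge> 1 \<Longrightarrow> geo_steps x n k (\<lambda>p. c * \<psi> p + e) = (\<lambda>p. c * geo_steps x n k \<psi> p + e)"
  by (induction k arbitrary: \<psi>) (simp_all add: geo_step_affine)

lemma geo_steps_scale: "geo_steps x n k (\<lambda>p. c * \<psi> p) = (\<lambda>p. c * geo_steps x n k \<psi> p)"
  by (induction k arbitrary: \<psi>) (simp_all add: geo_step_scale)

lemma geo_steps_square_le: "(geo_steps x n k \<psi> p)\<^sup>2 \<le> geo_steps x n k (\<lambda>q. (\<psi> q)\<^sup>2) p"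
proof (induction k arbitrary: \<psi> p)
  case (Suc k)
  have "(geo_steps x n (Suc k) \<psi> p)\<^sup>2 \<le> geo_steps x n k (\<lambda>q. (geo_step x n (1 / real (k + 2)) \<psi> q)\<^sup>2) p"
    using Suc by simp
  also have "\<dots> \<le> geo_steps x n (Suc k) (\<lambda>q. (\<psi> q)\<^sup>2) p"
    by (simp add: geo_step_def geo_steps_mono avg_square_le)
  finally show ?case .
qed simp

lemma geo_step_lipschitz:
  assumes cat: "CAT0 TYPE('a::complete_space)" and n: "n \<ge> 1" and t: "0 \<le> t" "t \<le> 1"
    and \<psi>: "L-lipschitz_on UNIV \<psi>"
  shows "(L * (1 - t))-lipschitz_on UNIV (geo_step (x :: nat \<Rightarrow> 'a) n t \<psi>)"
proof (rule lipschitz_onI)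
  show "0 \<le> L * (1 - t)"
    using lipschitz_on_nonneg[OF \<psi>] t by simp
  fix p q :: 'a
  have "\<bar>\<psi> (geo_pt p (x i) t) - \<psi> (geo_pt q (x i) t)\<bar> \<le> L * (1 - t) * dist p q" for i
  proof -
    have "\<bar>\<psi> (geo_pt p (x i) t) - \<psi> (geo_pt q (x i) t)\<bar> \<le> L * dist (geo_pt p (x i) t) (geo_pt q (x i) t)"
      using lipschitz_onD[OF \<psi>] by (simp add: dist_real_def)
    also have "\<dots> \<le> L * ((1 - t) * dist p q)"
      by (intro mult_left_mono CAT0_geo_pt_dist_start[OF cat t] lipschitz_on_nonneg[OF \<psi>])
    finally show ?thesis by simp
  qed
  then show "dist (geo_step x n t \<psi> p) (geo_step x n t \<psi> q) \<le> L * (1 - t) * dist p q"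
    unfolding geo_step_def dist_real_def by (intro avg_diff_le n)
qed

lemma geo_steps_lipschitz:
  assumes cat: "CAT0 TYPE('a::complete_space)" and n: "n \<ge> 1"
  shows "L-lipschitz_on UNIV \<psi> \<Longrightarrow> (L / real (k + 1))-lipschitz_on UNIV (geo_steps (x :: nat \<Rightarrow> 'a) n k \<psi>)"
proof (induction k arbitrary: \<psi> L)
  case (Suc k)
  have "(L * (1 - 1 / real (k + 2)))-lipschitz_on UNIV (geo_step x n (1 / real (k + 2)) \<psi>)"
    by (rule geo_step_lipschitz[OF cat n _ _ Suc.prems]) auto
  then have "(L * (1 - 1 / real (k + 2)) / real (k + 1))-lipschitz_on UNIV (geo_steps x n (Suc k) \<psi>)"
    using Suc.IH by simp
  moreover have "1 - 1 / real (k + 2) = real (k + 1) / real (k + 2)"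
    by (simp add: field_simps)
  ultimately show ?case by simp
qed simp

lemma geo_step_exp_le:
  assumes cat: "CAT0 TYPE('a::complete_space)" and n: "n \<ge> 1" and t: "0 \<le> t" "t \<le> 1"
    and l: "l \<ge> 0" and D: "\<And>i j. i < n \<Longrightarrow> j < n \<Longrightarrow> dist (x i) (x j) \<le> D"
    and g: "L-lipschitz_on UNIV g"
  shows "geo_step (x :: nat \<Rightarrow> 'a) n t (\<lambda>p. exp (l * g p)) p
    \<le> exp (l * geo_step x n t g p + l\<^sup>2 * (L * t * D)\<^sup>2 / 8)"
  unfolding geo_step_def
proof (rule avg_exp_le_Hoeffding[OF n _ l])
  fix i j assume ij: "i < n" "j < n"
  have "\<bar>g (geo_pt p (x i) t) - g (geo_pt p (x j) t)\<bar> \<le> L * dist (geo_pt p (x i) t) (geo_pt p (x j) t)"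
    using lipschitz_onD[OF g] by (simp add: dist_real_def)
  also have "\<dots> \<le> L * (t * D)"
    using CAT0_geo_pt_dist_end[OF cat t, of p "x i" "x j"] D[OF ij] t lipschitz_on_nonneg[OF g]
    by (intro mult_left_mono) (auto intro: order_trans mult_left_mono)
  finally show "\<bar>g (geo_pt p (x i) t) - g (geo_pt p (x j) t)\<bar> \<le> L * t * D"
    by simp
qed

lemma geo_steps_exp_le:
  assumes cat: "CAT0 TYPE('a::complete_space)" and n: "n \<ge> 1"
    and l: "l \<ge> 0" and D: "\<And>i j. i < n \<Longrightarrow> j < n \<Longrightarrow> dist (x i) (x j) \<le> D"
  shows "L-lipschitz_on UNIV g \<Longrightarrow> geo_steps (x :: nat \<Rightarrow> 'a) n k (\<lambda>p. exp (l * g p)) p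
    \<le> exp (l * geo_steps x n k g p + l\<^sup>2 * L\<^sup>2 * D\<^sup>2 * real k / (8 * (real k + 1)\<^sup>2))"
proof (induction k arbitrary: g L p)
  case (Suc k)
  define \<tau> where "\<tau> = 1 / real (k + 2)"
  have \<tau>: "0 \<le> \<tau>" "\<tau> \<le> 1"
    by (auto simp: \<tau>_def)
  define c where "c = l\<^sup>2 * (L * \<tau> * D)\<^sup>2 / 8"
  have lip: "(L * (1 - \<tau>))-lipschitz_on UNIV (geo_step x n \<tau> g)"
    by (rule geo_step_lipschitz[OF cat n \<tau> Suc.prems])
  have "geo_steps x n (Suc k) (\<lambda>p. exp (l * g p)) p
      \<le> geo_steps x n k (\<lambda>q. exp c * exp (l * geo_step x n \<tau> g q)) p"
    using geo_step_exp_le[OF cat n \<tau> l D Suc.prems]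
    by (auto simp: \<tau>_def c_def exp_add[symmetric] add.commute intro: geo_steps_mono)
  also have "\<dots> = exp c * geo_steps x n k (\<lambda>q. exp (l * geo_step x n \<tau> g q)) p"
    by (simp add: geo_steps_scale)
  also have "\<dots> \<le> exp c * exp (l * geo_steps x n k (geo_step x n \<tau> g) p
                    + l\<^sup>2 * (L * (1 - \<tau>))\<^sup>2 * D\<^sup>2 * real k / (8 * (real k + 1)\<^sup>2))"
    using Suc.IH[OF lip] by simp
  also have "\<dots> = exp (l * geo_steps x n (Suc k) g p
                    + l\<^sup>2 * L\<^sup>2 * D\<^sup>2 * real (Suc k) / (8 * (real (Suc k) + 1)\<^sup>2))"
  proof -
    have "1 - \<tau> = (real k + 1) / (real k + 2)"
      by (simp add: \<tau>_def field_simps)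
    then show ?thesis
      unfolding exp_add[symmetric] c_def
      by (simp add: \<tau>_def power_mult_distrib power_divide field_simps)
        (simp add: algebra_simps power2_eq_square)
  qed
  finally show ?case .
qed simp

lemma geo_step_dist_square_le:
  assumes cat: "CAT0 TYPE('a::complete_space)" and n: "n \<ge> 1"
    and bar: "is_barycenter n x b" and t: "0 \<le> t" "t \<le> 1"
  shows "geo_step (x :: nat \<Rightarrow> 'a) n t (\<lambda>q. (dist q b)\<^sup>2) p
    \<le> (1 - t)\<^sup>2 * (dist p b)\<^sup>2 + t\<^sup>2 * avg n (\<lambda>i. (dist (x i) b)\<^sup>2)"
proof -
  define V where "V = avg n (\<lambda>i. (dist (x i) b)\<^sup>2)"
  define W where "W = avg n (\<lambda>i. (dist p (x i))\<^sup>2)"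
  have "geo_step x n t (\<lambda>q. (dist q b)\<^sup>2) p
      \<le> avg n (\<lambda>i. (1 - t) * (dist p b)\<^sup>2 + t * (dist (x i) b)\<^sup>2 - t * (1 - t) * (dist p (x i))\<^sup>2)"
    unfolding geo_step_def by (intro avg_mono CAT0_CN_inequality[OF cat t])
  also have "\<dots> = (1 - t) * (dist p b)\<^sup>2 + t * V - t * (1 - t) * W"
    using n by (simp add: avg_def V_def W_def sum.distrib sum_subtractf sum_distrib_left
        add_divide_distrib diff_divide_distrib)
  also have "\<dots> \<le> (1 - t) * (dist p b)\<^sup>2 + t * V - t * (1 - t) * (V + (dist p b)\<^sup>2)"
    using CAT0_barycenter_variance_inequality[OF cat n bar, of p] t
    by (intro diff_left_mono mult_left_mono) (auto simp: V_def W_def)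
  also have "\<dots> = (1 - t)\<^sup>2 * (dist p b)\<^sup>2 + t\<^sup>2 * V"
    by (simp add: power2_eq_square algebra_simps)
  finally show ?thesis
    unfolding V_def .
qed

lemma geo_steps_dist_square_le:
  assumes cat: "CAT0 TYPE('a::complete_space)" and n: "n \<ge> 1" and bar: "is_barycenter n x b"
  shows "geo_steps (x :: nat \<Rightarrow> 'a) n k (\<lambda>q. (dist q b)\<^sup>2) p
    \<le> ((dist p b)\<^sup>2 + real k * avg n (\<lambda>i. (dist (x i) b)\<^sup>2)) / (real k + 1)\<^sup>2"
proof (induction k arbitrary: p)
  case (Suc k)
  define V where "V = avg n (\<lambda>i. (dist (x i) b)\<^sup>2)"
  define \<tau> where "\<tau> = 1 / real (k + 2)"
  have \<tau>: "0 \<le> \<tau>" "\<tau> \<le> 1"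
    by (auto simp: \<tau>_def)
  have "geo_steps x n (Suc k) (\<lambda>q. (dist q b)\<^sup>2) p
      \<le> geo_steps x n k (\<lambda>q. (1 - \<tau>)\<^sup>2 * (dist q b)\<^sup>2 + \<tau>\<^sup>2 * V) p"
    using geo_step_dist_square_le[OF cat n bar \<tau>]
    by (auto simp: \<tau>_def V_def intro: geo_steps_mono)
  also have "\<dots> = (1 - \<tau>)\<^sup>2 * geo_steps x n k (\<lambda>q. (dist q b)\<^sup>2) p + \<tau>\<^sup>2 * V"
    by (simp add: geo_steps_affine[OF n])
  also have "\<dots> \<le> (1 - \<tau>)\<^sup>2 * (((dist p b)\<^sup>2 + real k * V) / (real k + 1)\<^sup>2) + \<tau>\<^sup>2 * V"
    using Suc.IH[of p] by (intro add_right_mono mult_left_mono) (auto simp: V_def)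
  also have "\<dots> = ((dist p b)\<^sup>2 + real (Suc k) * V) / (real (Suc k) + 1)\<^sup>2"
  proof -
    have "1 - \<tau> = (real k + 1) / (real k + 2)"
      by (simp add: \<tau>_def field_simps)
    then show ?thesis
      by (simp add: \<tau>_def power_divide field_simps)
  qed
  finally show ?case
    unfolding V_def .
qed simp

section \<open>The iterated barycenter as a random variable\<close>

lemma Pi_pmf_atLeastAtMost_Suc:
  "Pi_pmf {1..Suc m} d (\<lambda>_. p) = do {I \<leftarrow> Pi_pmf {1..m} d (\<lambda>_. p); i \<leftarrow> p; return_pmf (I(Suc m := i))}"
proof -
  have "{1..Suc m} = insert (Suc m) {1..m}"
    by auto
  then show ?thesis
    by (simp add: Pi_pmf_insert' bind_commute_pmf[of p])
qed

lemma ibar_aux_cong: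
  "(\<And>j. 1 \<le> j \<Longrightarrow> j \<le> k + 1 \<Longrightarrow> X j = Y j) \<Longrightarrow> ibar_aux t X k = ibar_aux t Y k"
  by (induction k) auto

lemma nn_integral_iter_bary:
  assumes n: "n \<ge> 1" and \<phi>: "\<And>p. 0 \<le> \<phi> p"
  shows "(\<integral>\<^sup>+I. ennreal (\<phi> (iter_bary (\<lambda>k. 1 / real k) (\<lambda>k. x (I k)) (Suc k)))
            \<partial>measure_pmf (Pi_pmf {1..Suc k} 0 (\<lambda>_. pmf_of_set {..<n})))
         = ennreal (avg n (\<lambda>i. geo_steps x n k \<phi> (x i)))"
  using \<phi>
proof (induction k arbitrary: \<phi>)
  case 0
  have "Pi_pmf {1..Suc 0} 0 (\<lambda>_. pmf_of_set {..<n}) = map_pmf (\<lambda>i. (\<lambda>_. 0)(1 := i)) (pmf_of_set {..<n})"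
    unfolding Pi_pmf_atLeastAtMost_Suc[of 0] by (simp add: map_pmf_def bind_return_pmf)
  then show ?case
    by (simp add: iter_bary_def nn_integral_pmf_of_set_lessThan[OF n] 0)
next
  case (Suc k)
  let ?b = "\<lambda>I. iter_bary (\<lambda>k. 1 / real k) (\<lambda>k. x (I k)) (Suc k)"
  have step: "iter_bary (\<lambda>k. 1 / real k) (\<lambda>j. x ((I(Suc (Suc k) := i)) j)) (Suc (Suc k))
      = geo_pt (?b I) (x i) (1 / real (k + 2))" for I i
  proof -
    have "ibar_aux (\<lambda>k. 1 / real k) (\<lambda>j. x ((I(Suc (Suc k) := i)) j)) k
        = ibar_aux (\<lambda>k. 1 / real k) (\<lambda>j. x (I j)) k"
      by (rule ibar_aux_cong) auto
    then show ?thesis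
      by (simp add: iter_bary_def)
  qed
  have "(\<integral>\<^sup>+I. ennreal (\<phi> (iter_bary (\<lambda>k. 1 / real k) (\<lambda>k. x (I k)) (Suc (Suc k))))
            \<partial>measure_pmf (Pi_pmf {1..Suc (Suc k)} 0 (\<lambda>_. pmf_of_set {..<n})))
      = (\<integral>\<^sup>+I. (\<integral>\<^sup>+i. ennreal (\<phi> (geo_pt (?b I) (x i) (1 / real (k + 2))))
            \<partial>measure_pmf (pmf_of_set {..<n})) \<partial>measure_pmf (Pi_pmf {1..Suc k} 0 (\<lambda>_. pmf_of_set {..<n})))"
    unfolding Pi_pmf_atLeastAtMost_Suc[of "Suc k"] by (simp add: step del: fun_upd_apply)
  also have "\<dots> = (\<integral>\<^sup>+I. ennreal (geo_step x n (1 / real (k + 2)) \<phi> (?b I))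
            \<partial>measure_pmf (Pi_pmf {1..Suc k} 0 (\<lambda>_. pmf_of_set {..<n})))"
    by (simp add: geo_step_def nn_integral_pmf_of_set_lessThan[OF n] Suc.prems)
  also have "\<dots> = ennreal (avg n (\<lambda>i. geo_steps x n (Suc k) \<phi> (x i)))"
    using Suc.IH[of "geo_step x n (1 / real (k + 2)) \<phi>"] Suc.prems
    by (simp add: geo_step_nonneg)
  finally show ?case .
qed

section \<open>Concentration\<close>

lemma avg_geo_steps_dist_square_le:
  assumes cat: "CAT0 TYPE('a::complete_space)" and n: "n \<ge> 1" and bar: "is_barycenter n x b"
  shows "(avg n (\<lambda>i. geo_steps (x :: nat \<Rightarrow> 'a) n k (\<lambda>p. dist p b) (x i)))\<^sup>2
    \<le> avg n (\<lambda>i. (dist (x i) b)\<^sup>2) / real (k + 1)"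
proof -
  define V where "V = avg n (\<lambda>i. (dist (x i) b)\<^sup>2)"
  have "(avg n (\<lambda>i. geo_steps x n k (\<lambda>p. dist p b) (x i)))\<^sup>2
      \<le> avg n (\<lambda>i. (geo_steps x n k (\<lambda>p. dist p b) (x i))\<^sup>2)"
    by (rule avg_square_le)
  also have "\<dots> \<le> avg n (\<lambda>i. geo_steps x n k (\<lambda>p. (dist p b)\<^sup>2) (x i))"
    by (intro avg_mono geo_steps_square_le)
  also have "\<dots> \<le> avg n (\<lambda>i. 1 / (real k + 1)\<^sup>2 * (dist (x i) b)\<^sup>2 + real k * V / (real k + 1)\<^sup>2)"
    using geo_steps_dist_square_le[OF cat n bar]
    by (intro avg_mono) (simp add: V_def add_divide_distrib)
  also have "\<dots> = (real k + 1) * V / (real k + 1)\<^sup>2"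
    unfolding avg_affine[OF n] V_def[symmetric] by (simp add: field_simps)
  also have "\<dots> = V / real (k + 1)"
    by (simp add: power2_eq_square)
  finally show ?thesis
    unfolding V_def .
qed

lemma avg_geo_steps_exp_le:
  assumes cat: "CAT0 TYPE('a::complete_space)" and n: "n \<ge> 1"
    and l: "l \<ge> 0" and D: "\<And>i j. i < n \<Longrightarrow> j < n \<Longrightarrow> dist (x i) (x j) \<le> D"
    and g: "L-lipschitz_on UNIV g"
  shows "avg n (\<lambda>i. geo_steps (x :: nat \<Rightarrow> 'a) n k (\<lambda>p. exp (l * g p)) (x i))
    \<le> exp (l * avg n (\<lambda>i. geo_steps x n k g (x i)) + l\<^sup>2 * L\<^sup>2 * D\<^sup>2 / (8 * real (k + 1)))"
proof -
  define c where "c = l\<^sup>2 * L\<^sup>2 * D\<^sup>2 * real k / (8 * (real k + 1)\<^sup>2)"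
  have "avg n (\<lambda>i. geo_steps x n k (\<lambda>p. exp (l * g p)) (x i))
      \<le> avg n (\<lambda>i. exp c * exp (l * geo_steps x n k g (x i)))"
    using geo_steps_exp_le[OF cat n l D g]
    by (intro avg_mono) (simp add: c_def exp_add[symmetric] add.commute)
  also have "\<dots> \<le> exp c * exp (l * avg n (\<lambda>i. geo_steps x n k g (x i)) + l\<^sup>2 * (L * D / real (k + 1))\<^sup>2 / 8)"
  proof (unfold avg_scale, intro mult_left_mono avg_exp_le_Hoeffding[OF n _ l])
    fix i j assume ij: "i < n" "j < n"
    have "(L / real (k + 1))-lipschitz_on UNIV (geo_steps x n k g)"
      by (rule geo_steps_lipschitz[OF cat n g])
    then have "\<bar>geo_steps x n k g (x i) - geo_steps x n k g (x j)\<bar> \<le> L / real (k + 1) * dist (x i) (x j)"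
      using lipschitz_onD by (fastforce simp: dist_real_def)
    also have "\<dots> \<le> L / real (k + 1) * D"
      using D[OF ij] lipschitz_on_nonneg[OF g] by (intro mult_left_mono) auto
    finally show "\<bar>geo_steps x n k g (x i) - geo_steps x n k g (x j)\<bar> \<le> L * D / real (k + 1)"
      by simp
  qed simp
  also have "\<dots> = exp (l * avg n (\<lambda>i. geo_steps x n k g (x i)) + l\<^sup>2 * L\<^sup>2 * D\<^sup>2 / (8 * real (k + 1)))"
    unfolding exp_add[symmetric] c_def
    by (simp add: power_mult_distrib power_divide field_simps) (simp add: algebra_simps power2_eq_square)
  finally show ?thesis .
qed

lemma iter_bary_tail_bound:
  assumes cat: "CAT0 TYPE('a::complete_space)" and n: "n \<ge> 1"
    and l: "l \<ge> 0" and D: "\<And>i j. i < n \<Longrightarrow> j < n \<Longrightarrow> dist (x i) (x j) \<le> D"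
  shows "measure_pmf.prob (Pi_pmf {1..Suc k} 0 (\<lambda>_. pmf_of_set {..<n}))
           {I. \<eta> < dist (iter_bary (\<lambda>k. 1 / real k) (\<lambda>k. (x :: nat \<Rightarrow> 'a) (I k)) (Suc k)) b}
    \<le> exp (l * (avg n (\<lambda>i. geo_steps x n k (\<lambda>p. dist p b) (x i)) - \<eta>) + l\<^sup>2 * D\<^sup>2 / (8 * real (k + 1)))"
proof -
  define \<Omega> where "\<Omega> = measure_pmf (Pi_pmf {1..Suc k} 0 (\<lambda>_. pmf_of_set {..<n}))"
  define B where "B I = iter_bary (\<lambda>k. 1 / real k) (\<lambda>k. x (I k)) (Suc k)" for I
  define g where "g p = 1 * dist p b + - \<eta>" for p
    \<comment> \<open>in the affine shape of geo_steps_affine\<close>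
  have g: "1-lipschitz_on UNIV g"
    by (rule lipschitz_onI) (simp_all add: g_def dist_real_def, metis abs_dist_diff_le dist_commute)
  have "emeasure \<Omega> {I. \<eta> < dist (B I) b} = (\<integral>\<^sup>+I. indicator {I. \<eta> < dist (B I) b} I \<partial>\<Omega>)"
    by (simp add: \<Omega>_def)
  also have "\<dots> \<le> (\<integral>\<^sup>+I. ennreal (exp (l * g (B I))) \<partial>\<Omega>)"
    using l by (intro nn_integral_mono) (auto simp: indicator_def g_def)
  also have "\<dots> = ennreal (avg n (\<lambda>i. geo_steps x n k (\<lambda>p. exp (l * g p)) (x i)))"
    unfolding \<Omega>_def B_def by (rule nn_integral_iter_bary[OF n]) simp
  also have "\<dots> \<le> ennreal (exp (l * avg n (\<lambda>i. geo_steps x n k g (x i)) + l\<^sup>2 * 1\<^sup>2 * D\<^sup>2 / (8 * real (k + 1))))"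
    by (intro ennreal_leI avg_geo_steps_exp_le[OF cat n l D g])
  also have "avg n (\<lambda>i. geo_steps x n k g (x i)) = avg n (\<lambda>i. geo_steps x n k (\<lambda>p. dist p b) (x i)) - \<eta>"
    unfolding g_def geo_steps_affine[OF n] using avg_affine[OF n, of 1 _ "- \<eta>"] by simp
  finally show ?thesis
    by (simp add: \<Omega>_def B_def measure_pmf.emeasure_eq_measure)
qed

lemma barycenter_avg_dist_square_le:
  assumes n: "n \<ge> 1" and bar: "is_barycenter n x b"
    and D: "\<And>i j. i < n \<Longrightarrow> j < n \<Longrightarrow> dist (x i) (x j) \<le> D"
  shows "avg n (\<lambda>i. (dist (x i) b)\<^sup>2) \<le> D\<^sup>2"
proof -
  have "avg n (\<lambda>i. (dist (x i) b)\<^sup>2) \<le> avg n (\<lambda>i. (dist (x i) (x 0))\<^sup>2)"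
    using bar unfolding is_barycenter_avg by blast
  also have "\<dots> \<le> avg n (\<lambda>_. D\<^sup>2)"
    using D n by (intro avg_mono power_mono) auto
  finally show ?thesis
    by (simp add: avg_const[OF n])
qed

lemma avg_geo_steps_dist_square_le_diameter:
  assumes cat: "CAT0 TYPE('a::complete_space)" and n: "n \<ge> 1" and bar: "is_barycenter n x b"
    and D: "\<And>i j. i < n \<Longrightarrow> j < n \<Longrightarrow> dist (x i) (x j) \<le> D"
  shows "(avg n (\<lambda>i. geo_steps (x :: nat \<Rightarrow> 'a) n k (\<lambda>p. dist p b) (x i)))\<^sup>2 \<le> D\<^sup>2 / real (k + 1)"
proof -
  have "(avg n (\<lambda>i. geo_steps x n k (\<lambda>p. dist p b) (x i)))\<^sup>2
      \<le> avg n (\<lambda>i. (dist (x i) b)\<^sup>2) / real (k + 1)"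
    by (rule avg_geo_steps_dist_square_le[OF cat n bar])
  also have "\<dots> \<le> D\<^sup>2 / real (k + 1)"
    using barycenter_avg_dist_square_le[OF n bar D] by (intro divide_right_mono) simp_all
  finally show ?thesis .
qed

text \<open>Chernoff's bound with the exponential moment parameter 8 L / \<eta>.\<close>
lemma iter_bary_deviation_prob_le:
  assumes cat: "CAT0 TYPE('a::complete_space)" and n: "n \<ge> 1" and bar: "is_barycenter n x b"
    and D: "\<And>i j. i < n \<Longrightarrow> j < n \<Longrightarrow> dist (x i) (x j) \<le> D"
    and \<eta>: "\<eta> > 0" and L: "L \<ge> 1" and k: "4 * L * D\<^sup>2 \<le> real (Suc k) * \<eta>\<^sup>2"
  shows "measure_pmf.prob (Pi_pmf {1..Suc k} 0 (\<lambda>_. pmf_of_set {..<n}))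
           {I. \<eta> < dist (iter_bary (\<lambda>k. 1 / real k) (\<lambda>k. (x :: nat \<Rightarrow> 'a) (I k)) (Suc k)) b}
    \<le> exp (- 2 * L)"
proof -
  define E where "E = avg n (\<lambda>i. geo_steps x n k (\<lambda>p. dist p b) (x i))"
  define l where "l = 8 * L / \<eta>"
  have "E\<^sup>2 \<le> D\<^sup>2 / real (Suc k)"
    using avg_geo_steps_dist_square_le_diameter[OF cat n bar D] by (simp add: E_def)
  also have "\<dots> \<le> (\<eta> / 2)\<^sup>2"
    using k mult_right_mono[OF L zero_le_power2[of D]] by (simp add: power_divide field_simps)
  finally have "E \<le> \<eta> / 2"
    by (rule power2_le_imp_le) (use \<eta> in simp)
  then have "l * (E - \<eta>) \<le> l * (- \<eta> / 2)"
    using L \<eta> by (intro mult_left_mono) (auto simp: l_def)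
  also have "\<dots> = - 4 * L"
    using \<eta> by (simp add: l_def)
  finally have drift: "l * (E - \<eta>) \<le> - 4 * L" .
  have "l\<^sup>2 * D\<^sup>2 / (8 * real (k + 1)) = 8 * L\<^sup>2 / \<eta>\<^sup>2 * (D\<^sup>2 / real (Suc k))"
    using \<eta> by (simp add: l_def power_divide power_mult_distrib divide_simps)
  also have "\<dots> \<le> 8 * L\<^sup>2 / \<eta>\<^sup>2 * (\<eta>\<^sup>2 / (4 * L))"
    using k L \<eta> by (intro mult_left_mono) (simp_all add: field_simps)
  also have "\<dots> = 2 * L"
    using L \<eta> by (simp add: power2_eq_square)
  finally have spread: "l\<^sup>2 * D\<^sup>2 / (8 * real (k + 1)) \<le> 2 * L" .
  have "0 \<le> l"
    using L \<eta> by (simp add: l_def)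
  from iter_bary_tail_bound[where x = x and k = k and \<eta> = \<eta> and b = b, OF cat n this D]
  show ?thesis
    using drift spread unfolding E_def[symmetric] by (smt (verit) exp_le_cancel_iff)
qed

theorem mainTheorem16:
  fixes x :: "nat \<Rightarrow> 'a::complete_space" and n m :: nat and b :: 'a
    and \<eta> \<delta> :: real
  assumes "CAT0 TYPE('a)"
    and "n \<ge> 1"
    and "is_barycenter n x b"
    and "\<eta> > 0" and "0 < \<delta>" and "\<delta> < 1"
    and "m \<ge> 1"
    and "real m \<ge> 4 * (diameter (x ` {..<n}))\<^sup>2 / \<eta>\<^sup>2 * max 1 (ln (1 / \<delta>))"
  shows "measure_pmf.prob (Pi_pmf {1..m} 0 (\<lambda>_. pmf_of_set {..<n}))
           {I. dist (iter_bary (\<lambda>k. 1 / real k) (\<lambda>k. x (I k)) m) b \<le> \<eta>} \<ge> 1 - \<delta>"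
proof -
  obtain k where m: "m = Suc k"
    using assms(7) by (cases m) auto
  define D where "D = diameter (x ` {..<n})"
  define L where "L = max 1 (ln (1 / \<delta>))"
  have D: "\<And>i j. i < n \<Longrightarrow> j < n \<Longrightarrow> dist (x i) (x j) \<le> D"
    unfolding D_def by (auto intro!: diameter_bounded_bound finite_imp_bounded)
  have "4 * L * D\<^sup>2 \<le> real (Suc k) * \<eta>\<^sup>2"
    using assms(8) assms(4) by (simp add: m D_def L_def field_simps)
  then have "measure_pmf.prob (Pi_pmf {1..m} 0 (\<lambda>_. pmf_of_set {..<n}))
      {I. \<eta> < dist (iter_bary (\<lambda>k. 1 / real k) (\<lambda>k. x (I k)) m) b} \<le> exp (- 2 * L)"
    unfolding m using iter_bary_deviation_prob_le[OF assms(1-3) D assms(4)] by (simp add: L_def)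
  moreover have "exp (- 2 * L) \<le> \<delta>"
  proof -
    have "- 2 * L \<le> ln \<delta>"
      using assms(5,6) by (auto simp: L_def ln_div max_def)
    then show ?thesis
      using assms(5) by (metis exp_le_cancel_iff exp_ln)
  qed
  ultimately show ?thesis
    using measure_pmf.prob_compl[of "{I. \<eta> < dist (iter_bary (\<lambda>k. 1 / real k) (\<lambda>k. x (I k)) m) b}"]
    by (simp add: set_diff_eq not_less)
qed

end
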